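(* Let $q\ge2$, $t\ge1$, $b\ge1$, $n\ge bt+1$. Then for every $\sigma\in\Sigma_q$, \[ |\mathcal{D}_{t,b}(\boldsymbol{X}^{\sigma}_{n,q,b})|=D_{q,b}(n,t)=\sum_{i=0}^{t}\binom{n-bt}{i}\,d_{q-1,1}(t,t-i). \] In particular, $D_{2,b}(n,t)=\sum_{i=0}^{t}\binom{n-bt}{i}$.
   Context: $\Sigma_q=\{0,\ldots,q-1\}$. A $b$-burst-deletion at position $i\in[1,n-b+1]$ transforms $x_1\cdots x_n$ into $x_1\cdots x_{i-1}x_{i+b}\cdots x_n$. For $n\ge tb+1$ (and $t\ge0$), $\mathcal{D}_{t,b}(\boldsymbol{x})$ is the set of all length-$(n-tb)$ sequences obtainable from $\boldsymbol{x}$ by $t$ successive $b$-burst-deletions ($\mathcal{D}_{0,b}(\boldsymbol{x})=\{\boldsymbol{x}\}$). $D_{q,b}(n,t)=\max\{|\mathcal{D}_{t,b}(\boldsymbol{x})|:\boldsymbol{x}\in\Sigma_q^n\}$. For an alphabet size $q'\ge1$, $\sigma\in\Sigma_{q'}$ and $m\ge1$, the $b$-cyclic sequence $\boldsymbol{X}^{\sigma}_{m,q',b}=X_1\cdots X_m$ has $X_i\equiv\sigma+\lfloor (i-1)/b\rfloor\pmod{q'}$ (for $q'=1$ this is $0^m$). For $m\ge bs+1$, $s\ge 0$, $d_{q',b}(m,s):=|\mathcal{D}_{s,b}(\boldsymbol{X}^{0}_{m,q',b})|$; also $d_{q',b}(m,s)=1$ if $m=bs\ge0$, and $d_{q',b}(m,s)=0$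 if $m<bs$ or $s<0$. In particular $d_{q-1,1}(t,t-i)$ is the number of distinct subsequences of length $i$ of the cyclic sequence $\boldsymbol{X}^0_{t,q-1,1}$ (and equals $1$ when $q=2$). Convention: $\binom{m}{i}=0$ if $m<i$. *)

theory Defs
  imports Main
begin

text \<open>Positions are 0-indexed: deleting the burst starting at 0-based position i
  (i + b \<le> length x) corresponds to the paper's position i+1.\<close>

definition burst_dels :: "nat \<Rightarrow> nat list \<Rightarrow> nat list set" where
  "burst_dels b x = {take i x @ drop (i + b) x | i. i + b \<le> length x}"

fun Dset :: "nat \<Rightarrow> nat \<Rightarrow> nat list \<Rightarrow> nat list set" where
  "Dset 0 b x = {x}"
| "Dset (Suc t) b x = (\<Union>y\<in>Dset t b x. burst_dels b y)"

definition Dmax :: "nat \<Rightarrow> nat \<Rightarrow> nat \<Rightarrow> nat \<Rightarrow> nat" where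
  "Dmax q b n t = Max {card (Dset t b x) | x. length x = n \<and> set x \<subseteq> {..<q}}"

definition cyclic_seq :: "nat \<Rightarrow> nat \<Rightarrow> nat \<Rightarrow> nat \<Rightarrow> nat list" where
  "cyclic_seq \<sigma> m q' b = map (\<lambda>i. (\<sigma> + i div b) mod q') [0..<m]"

definition dcyc :: "nat \<Rightarrow> nat \<Rightarrow> nat \<Rightarrow> nat \<Rightarrow> nat" where
  "dcyc q' b m s = (if b * s + 1 \<le> m then card (Dset s b (cyclic_seq 0 m q' b))
                    else if m = b * s then 1 else 0)"

end

(*
  A word y arises from x by t bursts of length b exactly when
  x = u_0 y_1 u_1 ... y_m u_m with every gap u_i of length divisible by b.
  So the first letter of y is one of the heads x_0, x_b, ..., x_(bt); taking its
  first occurrence, at block index k, leaves t - k bursts to be deleted from the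
  suffix after it. Ranking the distinct heads by first occurrence, the r-th one
  (counting from 0) sits at block index at least r, and there are at most q of
  them. By induction on m = n - bt, |D_t(x)| is therefore at most the number
  N_q(m,t) of m-tuples over {0..q-1} with sum at most t. In a b-cyclic sequence
  the heads x_0, x_b, ..., x_(b min(q-1,t)) are pairwise distinct and every
  suffix is again cyclic (from a shifted phase), so the bound is attained.
  Finally N_q(m,t) = sum_i (m choose i) N_(q-1)(i,t-i) by choosing the nonzero
  coordinates, and N_(q-1)(i,t-i) = d_(q-1,1)(t,t-i) is the case b = 1.
*)

theory Submission
  imports Defs "HOL-Number_Theory.Cong"
begin

text \<open>\<^term>\<open>burst_emb b x y\<close> encodes \<open>x = u\<^sub>0 y\<^sub>1 u\<^sub>1 \<dots> y\<^sub>m u\<^sub>m\<close> with every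
  \<open>length u\<^sub>i\<close> divisible by b; here \<open>b * k = length u\<^sub>0\<close>.\<close>

fun burst_emb :: "nat \<Rightarrow> nat list \<Rightarrow> nat list \<Rightarrow> bool" where
  "burst_emb b x [] = (b dvd length x)"
| "burst_emb b x (a # y) =
     (\<exists>k. b * k < length x \<and> x ! (b * k) = a \<and> burst_emb b (drop (b * k + 1) x) y)"

lemma burst_emb_length:
  assumes "burst_emb b x y"
  obtains c where "length x = length y + b * c"
  using assms
proof (induction y arbitrary: x thesis)
  case Nil
  then show ?case by auto
next
  case (Cons a y)
  then obtain k where k: "b * k < length x" "burst_emb b (drop (b * k + 1) x) y" by auto
  with Cons.IH obtain c where "length (drop (b * k + 1) x) = length y + b * c" by blast
  with k have "length x = length (a # y) + b * (k + c)" by (simp add: algebra_simps)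
  then show ?case by (rule Cons.prems(1))
qed

lemma burst_emb_length_le: "burst_emb b x y \<Longrightarrow> length y \<le> length x"
  by (metis burst_emb_length le_add1)

lemma burst_emb_refl: "burst_emb b x x"
  by (induction x) (auto intro!: exI[of _ 0])

lemma burst_emb_prepend_blocks:
  assumes "burst_emb b w z" and "length u = b * c"
  shows "burst_emb b (u @ w) z"
proof (cases z)
  case Nil
  then show ?thesis using assms by auto
next
  case (Cons a z')
  then obtain k where k: "b * k < length w" "w ! (b * k) = a" "burst_emb b (drop (b * k + 1) w) z'"
    using assms(1) by auto
  have shift: "b * (c + k) = length u + b * k" using assms(2) by (simp add: algebra_simps)
  show ?thesis
    unfolding Cons burst_emb.simps
    by (rule exI[of _ "c + k"]) (use k shift in \<open>simp add: nth_append\<close>)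
qed

lemma burst_emb_append:
  "burst_emb b u v \<Longrightarrow> burst_emb b w y \<Longrightarrow> burst_emb b (u @ w) (v @ y)"
proof (induction v arbitrary: u)
  case Nil
  then obtain c where "length u = b * c" by auto
  then show ?case using burst_emb_prepend_blocks Nil by auto
next
  case (Cons a v)
  then obtain k where k: "b * k < length u" "u ! (b * k) = a" "burst_emb b (drop (b * k + 1) u) v"
    by auto
  have "burst_emb b (drop (b * k + 1) u @ w) (v @ y)" using Cons k by blast
  with k show ?case
    unfolding append_Cons burst_emb.simps by (intro exI[of _ k]) (simp add: nth_append)
qed

lemma burst_emb_split_append:
  assumes "burst_emb b x (v @ y)"
  obtains u w where "x = u @ w" "burst_emb b u v" "burst_emb b w y"
  using assms
proof (induction v arbitrary: x thesis)
  case Nil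
  show ?case by (rule Nil.prems(1)[of "[]" x]) (use Nil.prems(2) in auto)
next
  case (Cons a v)
  then obtain k where k: "b * k < length x" "x ! (b * k) = a" "burst_emb b (drop (b * k + 1) x) (v @ y)"
    by auto
  then obtain u' w where uw: "drop (b * k + 1) x = u' @ w" "burst_emb b u' v" "burst_emb b w y"
    using Cons.IH by blast
  define u where "u = take (b * k + 1) x @ u'"
  have "x = u @ w" unfolding u_def using uw(1) by (metis append.assoc append_take_drop_id)
  moreover have "burst_emb b u (a # v)"
    unfolding burst_emb.simps
    by (rule exI[of _ k]) (use k uw in \<open>simp add: u_def nth_append\<close>)
  ultimately show ?case using uw Cons.prems(1) by blast
qed

lemma burst_emb_burst_del:
  assumes "burst_emb b x y" and "z \<in> burst_dels b y"
  shows "burst_emb b x z"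
proof -
  obtain i where i: "i + b \<le> length y" and z: "z = take i y @ drop (i + b) y"
    using assms(2) unfolding burst_dels_def by auto
  have "y = take i y @ (take b (drop i y) @ drop (i + b) y)"
    by (metis add.commute append_take_drop_id drop_drop)
  then obtain u u2 w where x: "x = u @ u2 @ w" and "burst_emb b u (take i y)"
    and u2: "burst_emb b u2 (take b (drop i y))" and "burst_emb b w (drop (i + b) y)"
    using assms(1) by (metis burst_emb_split_append)
  moreover obtain c where "length u2 = length (take b (drop i y)) + b * c"
    using u2 by (rule burst_emb_length)
  then have "length u2 = b * Suc c" using i by simp
  ultimately show ?thesis
    unfolding z x using burst_emb_append burst_emb_prepend_blocks by blast
qed

lemma burst_emb_cases:
  assumes "burst_emb b x z" and "length z < length x" and "0 < b"
  obtains "b \<le> length x" "burst_emb b (drop b x) z"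
  | a x' z' where "x = a # x'" "z = a # z'" "burst_emb b x' z'"
proof (cases z)
  case Nil
  then obtain c where c: "length x = b * c" using assms(1) by auto
  with assms(2) Nil have "c \<noteq> 0" by auto
  then have "b \<le> length x" "length (drop b x) = b * (c - 1)"
    using c by (auto simp: diff_mult_distrib2)
  then show ?thesis using Nil that(1) by auto
next
  case (Cons a z')
  then obtain k where k: "b * k < length x" "x ! (b * k) = a" "burst_emb b (drop (b * k + 1) x) z'"
    using assms(1) by auto
  show ?thesis
  proof (cases k)
    case 0
    then have "x = a # drop 1 x" using k by (cases x) auto
    then show ?thesis using k 0 Cons that(2) by auto
  next
    case (Suc k')
    then have "b \<le> length x" using k by simp
    moreover have "burst_emb b (drop b x) z"
      unfolding Cons burst_emb.simps
      by (rule exI[of _ k']) (use k Suc in \<open>simp add: add.commute add.left_commute\<close>)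
    ultimately show ?thesis by (rule that(1))
  qed
qed

lemma burst_emb_insert_burst:
  assumes "burst_emb b x z" and "length x = length z + b * Suc t" and "0 < b"
  obtains y where "burst_emb b x y" "length x = length y + b * t" "z \<in> burst_dels b y"
  using assms
proof (induction z arbitrary: x thesis)
  case Nil
  from Nil.prems(2) have "b \<le> length x" "burst_emb b (drop b x) []"
    by (rule burst_emb_cases; use Nil.prems(3,4) in simp)+
  then have "burst_emb b (take b x @ drop b x) (take b x @ [])"
    using burst_emb_append burst_emb_refl by blast
  then show ?case
    by (intro Nil.prems(1)[of "take b x"])
      (use Nil.prems(3) \<open>b \<le> length x\<close> in \<open>auto simp: burst_dels_def intro!: exI[of _ 0]\<close>)
next
  case (Cons a z)
  from Cons.prems(2) show ?case
  proof (rule burst_emb_cases)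
    assume "b \<le> length x" "burst_emb b (drop b x) (a # z)"
    then have "burst_emb b (take b x @ drop b x) (take b x @ a # z)"
      using burst_emb_append burst_emb_refl by blast
    then show ?thesis
      by (intro Cons.prems(1)[of "take b x @ a # z"])
        (use Cons.prems(3) \<open>b \<le> length x\<close> in \<open>auto simp: burst_dels_def intro!: exI[of _ 0]\<close>)
  next
    fix a' x' z' assume x: "x = a' # x'" and "a # z = a' # z'" and "burst_emb b x' z'"
    then obtain y where y: "burst_emb b x' y" "length x' = length y + b * t" "z \<in> burst_dels b y"
      using Cons.IH Cons.prems(3,4) by auto
    then obtain i where i: "i + b \<le> length y" "z = take i y @ drop (i + b) y"
      unfolding burst_dels_def by auto
    have emb: "burst_emb b x (a # y)"
      using x \<open>a # z = a' # z'\<close> y(1) by (auto intro!: exI[of _ 0])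
    have del: "a # z \<in> burst_dels b (a # y)"
      unfolding burst_dels_def using i by (auto intro!: exI[of _ "Suc i"])
    have "length x = length (a # y) + b * t" using x y(2) by simp
    then show ?thesis using Cons.prems(1) emb del by blast
  qed (use Cons.prems(3,4) in auto)
qed

lemma burst_emb_same_length:
  assumes "burst_emb b x y" "length x = length y" "0 < b"
  shows "x = y"
  using assms
proof (induction y arbitrary: x)
  case Nil
  then show ?case by simp
next
  case (Cons a y)
  then obtain k where k: "b * k < length x" "x ! (b * k) = a" "burst_emb b (drop (b * k + 1) x) y"
    by auto
  obtain c where "length (drop (b * k + 1) x) = length y + b * c"
    using k(3) by (rule burst_emb_length)
  then have "b * k + b * c = 0" using Cons.prems(2) k(1) by (simp only: length_drop length_Cons)
  then have "k = 0" using Cons.prems(3) by simp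
  then have "x = a # drop 1 x" using k by (cases x) auto
  moreover have "drop 1 x = y"
    using Cons.IH[of "drop 1 x"] k \<open>k = 0\<close> Cons.prems(2,3) by simp
  ultimately show ?case by simp
qed

theorem Dset_eq_burst_emb:
  assumes "0 < b"
  shows "Dset t b x = {y. burst_emb b x y \<and> length x = length y + b * t}"
proof (induction t)
  case 0
  then show ?case using burst_emb_same_length burst_emb_refl assms by auto
next
  case (Suc t)
  show ?case
  proof (intro set_eqI iffI)
    fix z assume "z \<in> Dset (Suc t) b x"
    then obtain y where "y \<in> Dset t b x" "z \<in> burst_dels b y" by auto
    moreover from this(2) have "length y = length z + b"
      unfolding burst_dels_def by auto
    ultimately show "z \<in> {y. burst_emb b x y \<and> length x = length y + b * Suc t}"
      using Suc burst_emb_burst_del by auto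
  next
    fix z assume "z \<in> {y. burst_emb b x y \<and> length x = length y + b * Suc t}"
    then obtain y where "burst_emb b x y" "length x = length y + b * t" "z \<in> burst_dels b y"
      using burst_emb_insert_burst assms by blast
    then show "z \<in> Dset (Suc t) b x" using Suc by auto
  qed
qed

lemma finite_burst_dels: "finite (burst_dels b y)"
proof -
  have "burst_dels b y = (\<lambda>i. take i y @ drop (i + b) y) ` {i. i + b \<le> length y}"
    unfolding burst_dels_def by auto
  moreover have "finite {i. i + b \<le> length y}"
    by (rule finite_subset[of _ "{..length y}"]) auto
  ultimately show ?thesis by simp
qed

lemma finite_Dset: "finite (Dset t b x)"
  by (induction t) (simp_all add: finite_burst_dels)

fun tuple_count :: "nat \<Rightarrow> nat \<Rightarrow> nat \<Rightarrow> nat" where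
  "tuple_count q 0 t = 1"
| "tuple_count q (Suc m) t = (\<Sum>a<q. if a \<le> t then tuple_count q m (t - a) else 0)"

lemma tuple_count_mono: "s \<le> t \<Longrightarrow> tuple_count q m s \<le> tuple_count q m t"
  by (induction m arbitrary: s t) (auto intro!: sum_mono)

lemma tuple_count_Suc_filter:
  "tuple_count q (Suc m) t = (\<Sum>a\<in>{a\<in>{..<q}. a \<le> t}. tuple_count q m (t - a))"
  by (simp only: tuple_count.simps sum.inter_filter[OF finite_lessThan])

lemma tuple_count_0: "0 < q \<Longrightarrow> tuple_count q m 0 = 1"
  by (induction m) (simp_all add: sum.If_cases lessThan_def)

lemma tuple_count_1: "tuple_count 1 m t = 1"
  by (induction m arbitrary: t) auto

lemma sum_atMost_diff_if:
  fixes g :: "nat \<Rightarrow> 'a :: comm_monoid_add"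
  shows "(if a \<le> s then (\<Sum>j\<le>s - a. g j) else 0) = (\<Sum>j\<le>s. if j + a \<le> s then g j else 0)"
proof -
  have "{j\<in>{..s}. j + a \<le> s} = {..s - a}" if "a \<le> s" using that by auto
  moreover have "{j\<in>{..s}. j + a \<le> s} = {}" if "\<not> a \<le> s" using that by auto
  ultimately show ?thesis by (simp add: sum.inter_filter[symmetric])
qed

lemma tuple_count_binomial:
  "tuple_count (Suc p) m t = (\<Sum>i\<le>t. (m choose i) * tuple_count p i (t - i))"
proof (induction m arbitrary: t)
  case 0
  have "(\<Sum>i\<le>t. (0 choose i) * tuple_count p i (t - i)) = (\<Sum>i\<in>{0}. (0 choose i) * tuple_count p i (t - i))"
    by (rule sum.mono_neutral_right) auto
  then show ?case by simp
next
  case (Suc m)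
  let ?R = "\<lambda>m t. \<Sum>i\<le>t. (m choose i) * tuple_count p i (t - i)"
  show ?case
  proof (cases t)
    case 0
    then show ?thesis by (simp add: tuple_count_0)
  next
    case (Suc s)
    have "tuple_count (Suc p) (Suc m) t
        = ?R m t + (\<Sum>a<p. if a \<le> s then ?R m (s - a) else 0)"
      unfolding \<open>t = Suc s\<close>
      by (simp only: tuple_count.simps sum.lessThan_Suc_shift Suc.IH diff_Suc_Suc Suc_le_mono) simp
    also have "(\<Sum>a<p. if a \<le> s then ?R m (s - a) else 0)
        = (\<Sum>a<p. \<Sum>j\<le>s. if j + a \<le> s then (m choose j) * tuple_count p j (s - a - j) else 0)"
      by (rule sum.cong[OF refl], subst sum_atMost_diff_if[symmetric]) simp
    also have "\<dots> = (\<Sum>j\<le>s. \<Sum>a<p. if j + a \<le> s then (m choose j) * tuple_count p j (s - a - j) else 0)"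
      by (rule sum.swap)
    also have "\<dots> = (\<Sum>j\<le>s. (m choose j) * tuple_count p (Suc j) (s - j))"
    proof (rule sum.cong[OF refl])
      fix j assume "j \<in> {..s}"
      then have "(if j + a \<le> s then (m choose j) * tuple_count p j (s - a - j) else 0)
          = (m choose j) * (if a \<le> s - j then tuple_count p j (s - j - a) else 0)" for a
        by (auto simp: add.commute)
      then show "(\<Sum>a<p. if j + a \<le> s then (m choose j) * tuple_count p j (s - a - j) else 0)
          = (m choose j) * tuple_count p (Suc j) (s - j)"
        by (simp add: sum_distrib_left)
    qed
    finally have "tuple_count (Suc p) (Suc m) t
        = ?R m t + (\<Sum>j\<le>s. (m choose j) * tuple_count p (Suc j) (s - j))" .
    also have "\<dots> = ?R (Suc m) t"
      by (simp only: \<open>t = Suc s\<close> sum.atMost_Suc_shift diff_Suc_Suc binomial_Suc_Suc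
          distrib_right sum.distrib) (simp del: tuple_count.simps)
    finally show ?thesis .
  qed
qed

definition heads :: "nat \<Rightarrow> nat \<Rightarrow> nat list \<Rightarrow> nat set" where
  "heads b t x = (\<lambda>k. x ! (b * k)) ` {..t}"

definition head_index :: "nat \<Rightarrow> nat \<Rightarrow> nat list \<Rightarrow> nat \<Rightarrow> nat" where
  "head_index b t x a = (LEAST k. k \<le> t \<and> x ! (b * k) = a)"

lemma head_index:
  assumes "a \<in> heads b t x"
  shows "head_index b t x a \<le> t" and "x ! (b * head_index b t x a) = a"
    and "j < head_index b t x a \<Longrightarrow> x ! (b * j) \<noteq> a"
proof -
  from assms obtain k where "k \<le> t \<and> x ! (b * k) = a" unfolding heads_def by auto
  then have "head_index b t x a \<le> t \<and> x ! (b * head_index b t x a) = a"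
    unfolding head_index_def by (rule LeastI)
  then show "head_index b t x a \<le> t" "x ! (b * head_index b t x a) = a" by auto
  show "x ! (b * j) \<noteq> a" if "j < head_index b t x a"
    using not_less_Least[OF that[unfolded head_index_def]] that \<open>head_index b t x a \<le> t\<close>
    unfolding head_index_def by auto
qed

lemma head_index_le: "k \<le> t \<Longrightarrow> x ! (b * k) = a \<Longrightarrow> head_index b t x a \<le> k"
  unfolding head_index_def by (rule Least_le) simp

lemma burst_emb_drop_le:
  assumes "burst_emb b (drop (b * k + 1) x) y" and "j \<le> k" and "b * k < length x"
  shows "burst_emb b (drop (b * j + 1) x) y"
proof -
  let ?u = "take (b * (k - j)) (drop (b * j + 1) x)"
  have "b * (k - j) + (b * j + 1) = b * k + 1"
    using \<open>j \<le> k\<close> by (simp add: diff_mult_distrib2)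
  then have "drop (b * j + 1) x = ?u @ drop (b * k + 1) x"
    by (metis append_take_drop_id drop_drop)
  moreover have "length ?u = b * (k - j)"
    using assms(2,3) by (simp add: diff_mult_distrib2)
  ultimately show ?thesis using burst_emb_prepend_blocks assms(1) by metis
qed

lemma Cons_in_Dset_iff:
  assumes "0 < b" and "b * t < length x"
  shows "a # y \<in> Dset t b x \<longleftrightarrow> a \<in> heads b t x
    \<and> y \<in> Dset (t - head_index b t x a) b (drop (b * head_index b t x a + 1) x)"
    (is "_ \<longleftrightarrow> _ \<and> y \<in> Dset (t - ?k) b (drop (b * ?k + 1) x)")
proof
  assume "a # y \<in> Dset t b x"
  then have len: "length x = Suc (length y) + b * t" and "burst_emb b x (a # y)"
    using Dset_eq_burst_emb[OF assms(1)] by auto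
  then obtain k where k: "b * k < length x" "x ! (b * k) = a" "burst_emb b (drop (b * k + 1) x) y"
    by auto
  have "length y \<le> length x - (b * k + 1)"
    using burst_emb_length_le[OF k(3)] by simp
  then have "b * k \<le> b * t" using len k(1) by linarith
  then have "k \<le> t" using assms by simp
  then have a: "a \<in> heads b t x" using k(2) unfolding heads_def by blast
  have "?k \<le> k" using head_index_le[OF \<open>k \<le> t\<close> k(2)] .
  then have "burst_emb b (drop (b * ?k + 1) x) y" using burst_emb_drop_le k(1,3) by blast
  moreover have "length (drop (b * ?k + 1) x) = length y + b * (t - ?k)"
    using len head_index(1)[OF a] by (simp add: diff_mult_distrib2)
  ultimately show "a \<in> heads b t x \<and> y \<in> Dset (t - ?k) b (drop (b * ?k + 1) x)"
    using a Dset_eq_burst_emb[OF assms(1)] by simp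
next
  assume "a \<in> heads b t x \<and> y \<in> Dset (t - ?k) b (drop (b * ?k + 1) x)"
  then have a: "a \<in> heads b t x" and emb: "burst_emb b (drop (b * ?k + 1) x) y"
    and len: "length (drop (b * ?k + 1) x) = length y + b * (t - ?k)"
    using Dset_eq_burst_emb[OF assms(1)] by auto
  have k: "?k \<le> t" "x ! (b * ?k) = a" using head_index[OF a] by auto
  then have "b * ?k \<le> b * t" by simp
  moreover have "length x - (b * ?k + 1) = length y + (b * t - b * ?k)"
    using len by (simp add: diff_mult_distrib2)
  ultimately have "b * ?k < length x" and "length x = Suc (length y) + b * t"
    using assms(2) by linarith+
  then show "a # y \<in> Dset t b x"
    using k emb Dset_eq_burst_emb[OF assms(1)] by auto
qed

lemma card_Dset_heads:
  assumes "0 < b" and "b * t < length x"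
  shows "card (Dset t b x) = (\<Sum>a\<in>heads b t x.
    card (Dset (t - head_index b t x a) b (drop (b * head_index b t x a + 1) x)))"
proof -
  let ?D = "\<lambda>a. Dset (t - head_index b t x a) b (drop (b * head_index b t x a + 1) x)"
  have "[] \<notin> Dset t b x" using assms Dset_eq_burst_emb[OF assms(1)] by auto
  have "Dset t b x = (\<Union>a\<in>heads b t x. (#) a ` ?D a)"
  proof (rule set_eqI)
    fix z
    show "z \<in> Dset t b x \<longleftrightarrow> z \<in> (\<Union>a\<in>heads b t x. (#) a ` ?D a)"
    proof (cases z)
      case Nil
      then show ?thesis using \<open>[] \<notin> Dset t b x\<close> by auto
    next
      case (Cons a y)
      then show ?thesis using Cons_in_Dset_iff[OF assms, of a y] by auto
    qed
  qed
  then have "card (Dset t b x) = card (\<Union>a\<in>heads b t x. (#) a ` ?D a)"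
    by simp
  also have "\<dots> = (\<Sum>a\<in>heads b t x. card ((#) a ` ?D a))"
    by (rule card_UN_disjoint) (auto simp: heads_def finite_Dset)
  also have "\<dots> = (\<Sum>a\<in>heads b t x. card (?D a))"
    by (simp add: card_image)
  finally show ?thesis .
qed

definition head_rank :: "nat \<Rightarrow> nat \<Rightarrow> nat list \<Rightarrow> nat \<Rightarrow> nat" where
  "head_rank b t x a = card ((\<lambda>j. x ! (b * j)) ` {..<head_index b t x a})"

lemma head_rank_le_index: "head_rank b t x a \<le> head_index b t x a"
  unfolding head_rank_def using card_image_le[of "{..<head_index b t x a}"] by simp

lemma head_rank_less_alphabet:
  assumes "a \<in> heads b t x" and "b * t < length x" and "set x \<subseteq> {..<q}"
  shows "head_rank b t x a < q"
proof -
  let ?k = "head_index b t x a"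
  have in_alphabet: "x ! (b * j) < q" if "j \<le> ?k" for j
  proof -
    have "b * j \<le> b * t" using that head_index(1)[OF assms(1)] by simp
    then have "b * j < length x" using assms(2) by linarith
    then show ?thesis using assms(3) nth_mem by blast
  qed
  have "(\<lambda>j. x ! (b * j)) ` {..<?k} \<subseteq> {..<q} - {a}"
    using in_alphabet head_index(3)[OF assms(1)] by auto
  then have "head_rank b t x a \<le> card ({..<q} - {a})"
    unfolding head_rank_def by (rule card_mono[rotated]) simp
  also have "\<dots> < q"
    using in_alphabet[of ?k] head_index(2)[OF assms(1)] by simp
  finally show ?thesis .
qed

lemma head_rank_strict_mono:
  assumes "a \<in> heads b t x" and "head_index b t x a < head_index b t x a'"
  shows "head_rank b t x a < head_rank b t x a'"
proof -
  let ?f = "\<lambda>j. x ! (b * j)"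
  let ?A = "?f ` {..<head_index b t x a}" and ?A' = "?f ` {..<head_index b t x a'}"
  have "?A \<subseteq> ?A'" using assms(2) by (intro image_mono) simp
  moreover have "a \<in> ?A'"
    using imageI[of "head_index b t x a" "{..<head_index b t x a'}" ?f] assms(2)
    unfolding head_index(2)[OF assms(1)] by simp
  moreover have "a \<notin> ?A" using head_index(3)[OF assms(1)] by auto
  ultimately have "?A \<subset> ?A'" by (intro psubsetI) auto
  then show ?thesis unfolding head_rank_def by (rule psubset_card_mono[rotated]) simp
qed

lemma inj_on_head_rank: "inj_on (head_rank b t x) (heads b t x)"
proof (rule inj_onI)
  fix a a' assume a: "a \<in> heads b t x" and a': "a' \<in> heads b t x"
    and rank: "head_rank b t x a = head_rank b t x a'"
  have "head_index b t x a = head_index b t x a'"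
    using head_rank_strict_mono[OF a, of a'] head_rank_strict_mono[OF a', of a] rank
    by (cases "head_index b t x a" "head_index b t x a'" rule: linorder_cases) simp_all
  then have "x ! (b * head_index b t x a) = x ! (b * head_index b t x a')" by simp
  then show "a = a'" unfolding head_index(2)[OF a] head_index(2)[OF a'] .
qed

theorem card_Dset_le_tuple_count:
  assumes "0 < b" and "set x \<subseteq> {..<q}" and "length x = m + b * t"
  shows "card (Dset t b x) \<le> tuple_count q m t"
  using assms(2,3)
proof (induction m arbitrary: x t)
  case 0
  have "Dset t b x = {[]}" using 0 Dset_eq_burst_emb[OF assms(1)] by auto
  then show ?case by simp
next
  case (Suc m)
  let ?H = "heads b t x" and ?k = "head_index b t x" and ?r = "head_rank b t x"
  have len: "b * t < length x" using Suc.prems(2) by simp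
  have "card (Dset t b x) = (\<Sum>a\<in>?H. card (Dset (t - ?k a) b (drop (b * ?k a + 1) x)))"
    by (rule card_Dset_heads[OF assms(1) len])
  also have "\<dots> \<le> (\<Sum>a\<in>?H. tuple_count q m (t - ?k a))"
  proof (rule sum_mono)
    fix a assume "a \<in> ?H"
    then have "length (drop (b * ?k a + 1) x) = m + b * (t - ?k a)"
      using Suc.prems(2) head_index(1) by (simp add: diff_mult_distrib2)
    moreover have "set (drop (b * ?k a + 1) x) \<subseteq> {..<q}"
      using set_drop_subset Suc.prems(1) by (rule order_trans)
    ultimately show "card (Dset (t - ?k a) b (drop (b * ?k a + 1) x)) \<le> tuple_count q m (t - ?k a)"
      using Suc.IH by blast
  qed
  also have "\<dots> \<le> (\<Sum>a\<in>?H. tuple_count q m (t - ?r a))"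
    by (intro sum_mono tuple_count_mono diff_le_mono2 head_rank_le_index)
  also have "\<dots> = (\<Sum>j\<in>?r ` ?H. tuple_count q m (t - j))"
    by (simp add: sum.reindex[OF inj_on_head_rank])
  also have "\<dots> \<le> (\<Sum>j\<in>{j\<in>{..<q}. j \<le> t}. tuple_count q m (t - j))"
  proof (rule sum_mono2)
    show "?r ` ?H \<subseteq> {j\<in>{..<q}. j \<le> t}"
    proof
      fix j assume "j \<in> ?r ` ?H"
      then obtain a where a: "a \<in> ?H" and j: "j = ?r a" by blast
      have "j < q" using head_rank_less_alphabet[OF a len Suc.prems(1)] j by simp
      moreover have "j \<le> t" using le_trans[OF head_rank_le_index head_index(1)[OF a]] j by simp
      ultimately show "j \<in> {j\<in>{..<q}. j \<le> t}" by simp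
    qed
  qed simp_all
  also have "\<dots> = tuple_count q (Suc m) t"
    by (rule tuple_count_Suc_filter[symmetric])
  finally show ?case .
qed

text \<open>Suffixes of a b-cyclic sequence start in the middle of a block, so the induction runs
  over windows of the cyclic sequence starting at an arbitrary position.\<close>

definition cyclic_window :: "nat \<Rightarrow> nat \<Rightarrow> nat \<Rightarrow> nat \<Rightarrow> nat list" where
  "cyclic_window off m q b = map (\<lambda>i. (i div b) mod q) [off..<off + m]"

lemma length_cyclic_window [simp]: "length (cyclic_window off m q b) = m"
  by (simp add: cyclic_window_def)

lemma nth_cyclic_window: "i < m \<Longrightarrow> cyclic_window off m q b ! i = ((off + i) div b) mod q"
  by (simp add: cyclic_window_def)

lemma drop_cyclic_window: "drop j (cyclic_window off m q b) = cyclic_window (off + j) (m - j) q b"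
  by (cases "j \<le> m") (simp_all add: cyclic_window_def drop_map)

lemma set_cyclic_window: "0 < q \<Longrightarrow> set (cyclic_window off m q b) \<subseteq> {..<q}"
  by (auto simp: cyclic_window_def)

lemma cyclic_seq_eq_cyclic_window: "0 < b \<Longrightarrow> cyclic_seq \<sigma> m q b = cyclic_window (\<sigma> * b) m q b"
  by (rule nth_equalityI) (simp_all add: cyclic_seq_def nth_cyclic_window)

lemma inj_on_add_mod: "inj_on (\<lambda>k. (c + k) mod q) {..<q :: nat}"
proof (rule inj_onI)
  fix j k assume "j \<in> {..<q}" "k \<in> {..<q}" "(c + j) mod q = (c + k) mod q"
  then show "j = k"
    by (auto simp: cong_def[symmetric] cong_add_lcancel_nat intro: cong_less_modulus_unique_nat)
qed

theorem card_Dset_cyclic_window: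
  assumes "0 < b" and "0 < q"
  shows "card (Dset t b (cyclic_window off (m + b * t) q b)) = tuple_count q m t"
proof (induction m arbitrary: off t)
  case 0
  have "Dset t b (cyclic_window off (b * t) q b) = {[]}"
    using Dset_eq_burst_emb[OF assms(1)] by auto
  then show ?case by simp
next
  case (Suc m)
  define x where "x = cyclic_window off (Suc m + b * t) q b"
  define f where "f k = (off div b + k) mod q" for k
  define K where "K = {k\<in>{..<q}. k \<le> t}"
  have len: "b * t < length x" unfolding x_def by simp
  have x_head: "x ! (b * k) = f k" if "k \<le> t" for k
  proof -
    have "b * k < Suc m + b * t" using that by (simp add: le_imp_less_Suc trans_le_add2)
    then show ?thesis using assms(1) by (simp add: x_def f_def nth_cyclic_window add.commute)
  qed
  have inj: "inj_on f K"
    unfolding f_def K_def by (rule inj_on_subset[OF inj_on_add_mod]) auto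
  have heads: "heads b t x = f ` K"
  proof
    show "heads b t x \<subseteq> f ` K"
    proof
      fix a assume "a \<in> heads b t x"
      then obtain k where "k \<le> t" "a = f k" unfolding heads_def using x_head by auto
      then have "a = f (k mod q)" and "k mod q \<in> K"
        using assms(2) by (auto simp: f_def K_def mod_add_right_eq intro: le_trans[OF mod_less_eq_dividend])
      then show "a \<in> f ` K" by blast
    qed
    show "f ` K \<subseteq> heads b t x" using x_head unfolding heads_def K_def by force
  qed
  have index: "head_index b t x (f k) = k" if "k \<in> K" for k
  proof -
    have "k \<le> t" using that unfolding K_def by simp
    then have le: "head_index b t x (f k) \<le> k" using head_index_le x_head by blast
    have "f k \<in> heads b t x" using heads that by blast
    then have "f (head_index b t x (f k)) = f k" using head_index(1,2) x_head by metis
    moreover have "head_index b t x (f k) \<in> K" using le that unfolding K_def by auto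
    ultimately show ?thesis using inj that by (auto dest: inj_onD)
  qed
  have "card (Dset t b x)
      = (\<Sum>a\<in>f ` K. card (Dset (t - head_index b t x a) b (drop (b * head_index b t x a + 1) x)))"
    using card_Dset_heads[OF assms(1) len] heads by simp
  also have "\<dots> = (\<Sum>k\<in>K. card (Dset (t - k) b (drop (b * k + 1) x)))"
    using index by (simp add: sum.reindex[OF inj])
  also have "\<dots> = (\<Sum>k\<in>K. tuple_count q m (t - k))"
  proof (rule sum.cong[OF refl])
    fix k assume "k \<in> K"
    then have "Suc m + b * t - (b * k + 1) = m + b * (t - k)"
      unfolding K_def by (simp add: diff_mult_distrib2)
    then have "drop (b * k + 1) x = cyclic_window (off + (b * k + 1)) (m + b * (t - k)) q b"
      unfolding x_def drop_cyclic_window by simp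
    then show "card (Dset (t - k) b (drop (b * k + 1) x)) = tuple_count q m (t - k)"
      using Suc.IH by simp
  qed
  also have "\<dots> = tuple_count q (Suc m) t"
    unfolding K_def by (rule tuple_count_Suc_filter[symmetric])
  finally show ?case unfolding x_def .
qed

corollary card_Dset_cyclic_seq:
  assumes "0 < b" and "0 < q" and "b * t \<le> n"
  shows "card (Dset t b (cyclic_seq \<sigma> n q b)) = tuple_count q (n - b * t) t"
  using card_Dset_cyclic_window[OF assms(1,2), of t "\<sigma> * b" "n - b * t"] assms(3)
  by (simp add: cyclic_seq_eq_cyclic_window[OF assms(1)])

corollary Dmax_eq_tuple_count:
  assumes "0 < b" and "0 < q" and "b * t \<le> n"
  shows "Dmax q b n t = tuple_count q (n - b * t) t"
proof -
  let ?N = "tuple_count q (n - b * t) t"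
  let ?S = "{card (Dset t b x) | x. length x = n \<and> set x \<subseteq> {..<q}}"
  have bound: "s \<le> ?N" if "s \<in> ?S" for s
  proof -
    from that obtain x where "s = card (Dset t b x)" "length x = n" "set x \<subseteq> {..<q}"
      by blast
    then show ?thesis using card_Dset_le_tuple_count[OF assms(1), of x q "n - b * t" t] assms(3)
      by simp
  qed
  have "length (cyclic_seq 0 n q b) = n" "set (cyclic_seq 0 n q b) \<subseteq> {..<q}"
    using set_cyclic_window[OF assms(2)] by (simp_all add: cyclic_seq_eq_cyclic_window[OF assms(1)])
  then have "card (Dset t b (cyclic_seq 0 n q b)) \<in> ?S" by blast
  then have attained: "?N \<in> ?S" by (simp only: card_Dset_cyclic_seq[OF assms])
  have "?S \<subseteq> {..?N}" using bound by (intro subsetI) (simp only: atMost_iff)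
  then have "finite ?S" by (rule finite_subset) simp
  then show ?thesis unfolding Dmax_def using bound attained by (rule Max_eqI)
qed

lemma dcyc_eq_tuple_count:
  assumes "0 < p" and "i \<le> t"
  shows "dcyc p 1 t (t - i) = tuple_count p i (t - i)"
proof (cases "i = 0")
  case True
  then show ?thesis by (simp add: dcyc_def)
next
  case False
  then have "card (Dset (t - i) 1 (cyclic_seq 0 t p 1)) = tuple_count p i (t - i)"
    using card_Dset_cyclic_seq[of 1 p "t - i" t 0] assms by simp
  then show ?thesis using False assms(2) by (simp add: dcyc_def)
qed

theorem theorem4p6:
  fixes q t b n \<sigma> :: nat
  assumes "q \<ge> 2" and "t \<ge> 1" and "b \<ge> 1" and "n \<ge> b * t + 1" and "\<sigma> < q"
  shows "card (Dset t b (cyclic_seq \<sigma> n q b)) = Dmax q b n t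
       \<and> Dmax q b n t = (\<Sum>i=0..t. (n - b * t choose i) * dcyc (q - 1) 1 t (t - i))
       \<and> Dmax 2 b n t = (\<Sum>i=0..t. n - b * t choose i)"
proof -
  have b: "0 < b" and n: "b * t \<le> n" and q: "0 < q" and p: "0 < q - 1"
    using assms by auto
  have Dmax: "Dmax q b n t = tuple_count q (n - b * t) t"
    by (rule Dmax_eq_tuple_count[OF b q n])
  also have "\<dots> = (\<Sum>i\<le>t. (n - b * t choose i) * tuple_count (q - 1) i (t - i))"
    using tuple_count_binomial[of "q - 1"] p by simp
  also have "\<dots> = (\<Sum>i=0..t. (n - b * t choose i) * dcyc (q - 1) 1 t (t - i))"
    unfolding atLeast0AtMost using dcyc_eq_tuple_count[OF p] by (intro sum.cong) simp_all
  finally have formula: "Dmax q b n t = (\<Sum>i=0..t. (n - b * t choose i) * dcyc (q - 1) 1 t (t - i))" .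
  have "Dmax 2 b n t = tuple_count (Suc 1) (n - b * t) t"
    using Dmax_eq_tuple_count[OF b _ n, of 2] by (simp add: numeral_2_eq_2)
  also have "\<dots> = (\<Sum>i=0..t. n - b * t choose i)"
    by (simp only: tuple_count_binomial tuple_count_1 mult_1_right atLeast0AtMost)
  finally show ?thesis
    using formula Dmax card_Dset_cyclic_seq[OF b q n] by simp
qed

end
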